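(* For $n\in\mathbb N$ let $T(n)=\{(1,0,0,n),(0,1,0,n),(0,0,1,n),(0,0,0,n)\}$. Fix $n\in\mathbb N$ and let $\sigma$ be a state whose type belongs to $T(n)$. Then $\sigma$ is $4$-interval nice.
   Context: $\mathcal U=\{0,\dots,2^m-1\}$, Ulam–Rényi game with at most 3 lies. A state is a map $\sigma:\mathcal U\to\{0,1,2,3,4\}$, type $(t_0,\dots,t_3)$ with $t_i=|\sigma^{-1}(i)|$, support $\Sigma=\{y:\sigma(y)<4\}$, final if $|\Sigma|\le1$. For $Q\subseteq\mathcal U$: $\sigma_{yes}(y)=\min\{\sigma(y)+[y\notin Q],4\}$, $\sigma_{no}(y)=\min\{\sigma(y)+[y\in Q],4\}$. An interval is $\emptyset$ or $\{x\in\mathcal U:a\le x\le b\}$; a 4-interval question is a union of at most 4 intervals. $w_q(\sigma)=\sum_{j=0}^3t_j\sum_{\ell=0}^{3-j}\binom q\ell$, $ch(\sigma)=\min\{q\ge0:w_q(\sigma)\le2^q\}$. A strategy of size $q$ for $\sigma$ is a complete binary tree of depth $q$ with internal nodes labelled by questions and edges by answers; winning if every leaf state is final. Well-shaped: order $\Sigma$ cyclically by the natural order of $\mathcal U$; $\mathcal L^\sigma$ is the minimum-length cyclic list of possibly empty arcs (consecutive blocks of $\Sigma$, each on a single level) partitioning $\Sigma$ with cyclically consecutive arcs on levels differing by exactly 1; $\sigma$ is well-shaped iff $\mathcal L^\sigma$ has exactly $2i+1$ arcs on level $i$ for $i=0,1,2$ and exactly 3 arcs on level 3. $\sigma$ is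 $4$-interval nice if it is well-shaped and there is a winning strategy for $\sigma$ of size $ch(\sigma)$ using only 4-interval questions. *)

theory Defs
  imports Main
begin

text \<open>Ulam-Renyi game with at most 3 lies over the universe U = {0,...,2^m - 1}.
  A state is a function nat => nat; only its values on U matter.\<close>

definition univ :: "nat \<Rightarrow> nat set" where
  "univ m = {0..<2^m}"

definition is_state :: "nat \<Rightarrow> (nat \<Rightarrow> nat) \<Rightarrow> bool" where
  "is_state m \<sigma> \<longleftrightarrow> (\<forall>y\<in>univ m. \<sigma> y \<le> 4)"

definition tcount :: "nat \<Rightarrow> (nat \<Rightarrow> nat) \<Rightarrow> nat \<Rightarrow> nat" where
  "tcount m \<sigma> i = card {y \<in> univ m. \<sigma> y = i}"

definition state_type :: "nat \<Rightarrow> (nat \<Rightarrow> nat) \<Rightarrow> nat \<times> nat \<times> nat \<times> nat" where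
  "state_type m \<sigma> = (tcount m \<sigma> 0, tcount m \<sigma> 1, tcount m \<sigma> 2, tcount m \<sigma> 3)"

definition support :: "nat \<Rightarrow> (nat \<Rightarrow> nat) \<Rightarrow> nat set" where
  "support m \<sigma> = {y \<in> univ m. \<sigma> y < 4}"

definition final :: "nat \<Rightarrow> (nat \<Rightarrow> nat) \<Rightarrow> bool" where
  "final m \<sigma> \<longleftrightarrow> card (support m \<sigma>) \<le> 1"

definition ans_yes :: "(nat \<Rightarrow> nat) \<Rightarrow> nat set \<Rightarrow> nat \<Rightarrow> nat" where
  "ans_yes \<sigma> Q = (\<lambda>y. min (\<sigma> y + (if y \<notin> Q then 1 else 0)) 4)"

definition ans_no :: "(nat \<Rightarrow> nat) \<Rightarrow> nat set \<Rightarrow> nat \<Rightarrow> nat" where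
  "ans_no \<sigma> Q = (\<lambda>y. min (\<sigma> y + (if y \<in> Q then 1 else 0)) 4)"

definition is_interval :: "nat \<Rightarrow> nat set \<Rightarrow> bool" where
  "is_interval m I \<longleftrightarrow> I = {} \<or> (\<exists>a b. I = {x \<in> univ m. a \<le> x \<and> x \<le> b})"

definition four_interval_question :: "nat \<Rightarrow> nat set \<Rightarrow> bool" where
  "four_interval_question m Q \<longleftrightarrow>
     (\<exists>Is. length Is \<le> 4 \<and> (\<forall>I\<in>set Is. is_interval m I) \<and> Q = \<Union>(set Is))"

definition weight :: "nat \<Rightarrow> (nat \<Rightarrow> nat) \<Rightarrow> nat \<Rightarrow> nat" where
  "weight m \<sigma> q = (\<Sum>j\<le>3. tcount m \<sigma> j * (\<Sum>l\<le>3 - j. q choose l))"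

definition character :: "nat \<Rightarrow> (nat \<Rightarrow> nat) \<Rightarrow> nat" where
  "character m \<sigma> = (LEAST q. weight m \<sigma> q \<le> 2^q)"

datatype strategy = Leaf | Node "nat set" strategy strategy

fun complete_depth :: "strategy \<Rightarrow> nat \<Rightarrow> bool" where
  "complete_depth Leaf q \<longleftrightarrow> q = 0"
| "complete_depth (Node Q s t) q \<longleftrightarrow> q > 0 \<and> complete_depth s (q - 1) \<and> complete_depth t (q - 1)"

fun questions_ok :: "(nat set \<Rightarrow> bool) \<Rightarrow> strategy \<Rightarrow> bool" where
  "questions_ok P Leaf \<longleftrightarrow> True"
| "questions_ok P (Node Q s t) \<longleftrightarrow> P Q \<and> questions_ok P s \<and> questions_ok P t"

fun winning :: "nat \<Rightarrow> (nat \<Rightarrow> nat) \<Rightarrow> strategy \<Rightarrow> bool" where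
  "winning m \<sigma> Leaf \<longleftrightarrow> final m \<sigma>"
| "winning m \<sigma> (Node Q s t) \<longleftrightarrow> winning m (ans_yes \<sigma> Q) s \<and> winning m (ans_no \<sigma> Q) t"

text \<open>Well-shaped: the support, traversed cyclically in natural order (a rotation of its
  sorted list), is split into a cyclic list of 12 possibly empty arcs, each arc on a single
  level, cyclically consecutive arcs on levels differing by exactly 1, with exactly 2i+1 arcs on
  level i (i = 0,1,2) and 3 arcs on level 3.  An arc is a pair (level, list of its elements).\<close>

definition well_shaped :: "nat \<Rightarrow> (nat \<Rightarrow> nat) \<Rightarrow> bool" where
  "well_shaped m \<sigma> \<longleftrightarrow>
    (\<exists>r arcs :: (nat \<times> nat list) list.
       concat (map snd arcs) = rotate r (sorted_list_of_set (support m \<sigma>)) \<and>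
       (\<forall>(l, a) \<in> set arcs. l \<le> 3 \<and> (\<forall>y\<in>set a. \<sigma> y = l)) \<and>
       (\<forall>i < length arcs.
          \<bar>int (fst (arcs ! i)) - int (fst (arcs ! ((i + 1) mod length arcs)))\<bar> = 1) \<and>
       (\<forall>i < 3. length (filter (\<lambda>p. fst p = i) arcs) = 2 * i + 1) \<and>
       length (filter (\<lambda>p. fst p = 3) arcs) = 3)"

definition four_interval_nice :: "nat \<Rightarrow> (nat \<Rightarrow> nat) \<Rightarrow> bool" where
  "four_interval_nice m \<sigma> \<longleftrightarrow> well_shaped m \<sigma> \<and>
     (\<exists>S. complete_depth S (character m \<sigma>) \<and>
          questions_ok (four_interval_question m) S \<and> winning m \<sigma> S)"

definition T_types :: "nat \<Rightarrow> (nat \<times> nat \<times> nat \<times> nat) set" where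
  "T_types n = {(1,0,0,n), (0,1,0,n), (0,0,1,n), (0,0,0,n)}"

end

(* In a state whose type lies in T(n) at most one element x is below level 3, and every
   level-3 element has Berlekamp weight 1 however many questions remain.  Asking for x together
   with an initial segment of the universe, chosen so that the yes-answer gets weight at most
   2^q but as close to it as possible, preserves this shape, and by the conservation law the
   no-answer then has weight at most 2^q as well; induction on q gives a winning strategy of
   size ch(sigma) whose questions are unions of two intervals.  The support is well-shaped
   because, read cyclically from x, it is x followed by level-3 elements, which fits a fixed
   cyclic pattern of twelve arcs with all remaining arcs empty. *)

theory Submission imports Defs begin

section \<open>Berlekamp weights\<close>

text \<open>The number of answer sequences of length q that leave an element on level l possible.\<close>

definition level_weight :: "nat \<Rightarrow> nat \<Rightarrow> nat" where
  "level_weight l q = (if l \<le> 3 then (\<Sum>i\<le>3 - l. q choose i) else 0)"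

definition state_weight :: "nat \<Rightarrow> (nat \<Rightarrow> nat) \<Rightarrow> nat \<Rightarrow> nat" where
  "state_weight m \<sigma> q = (\<Sum>y\<in>univ m. level_weight (\<sigma> y) q)"

lemma finite_univ [simp]: "finite (univ m)"
  by (simp add: univ_def)

lemma card_univ: "card (univ m) = 2 ^ m"
  by (simp add: univ_def)

lemma finite_support [simp]: "finite (support m \<sigma>)"
  by (simp add: support_def)

lemma weight_eq_state_weight:
  assumes "is_state m \<sigma>"
  shows "weight m \<sigma> q = state_weight m \<sigma> q"
proof -
  have "state_weight m \<sigma> q = (\<Sum>j\<le>4. \<Sum>y | y \<in> univ m \<and> \<sigma> y = j. level_weight (\<sigma> y) q)"
    unfolding state_weight_def
    by (rule sum.group [symmetric]) (use assms in \<open>auto simp: is_state_def\<close>)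
  also have "\<dots> = (\<Sum>j\<le>4. tcount m \<sigma> j * level_weight j q)"
    by (rule sum.cong) (auto simp: tcount_def)
  also have "\<dots> = (\<Sum>j\<le>3. tcount m \<sigma> j * level_weight j q)"
    by (simp add: eval_nat_numeral level_weight_def)
  also have "\<dots> = weight m \<sigma> q"
    unfolding weight_def by (rule sum.cong) (auto simp: level_weight_def)
  finally show ?thesis by simp
qed

lemma level_weight_zero_questions: "level_weight l 0 = (if l \<le> 3 then 1 else 0)"
proof -
  have "(\<Sum>i\<le>k. (0::nat) choose i) = 1" for k
    by (induction k) auto
  then show ?thesis
    by (simp add: level_weight_def)
qed

lemma level_weight_Suc:
  assumes "l \<le> 4"
  shows "level_weight l (Suc q) = level_weight l q + level_weight (min (l + 1) 4) q"
proof -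
  have "l = 0 \<or> l = 1 \<or> l = 2 \<or> l = 3 \<or> l = 4"
    using assms by auto
  then show ?thesis
    by (auto simp: level_weight_def eval_nat_numeral)
qed

lemma level_weight_le_power:
  assumes "l \<le> 4"
  shows "level_weight l q \<le> 2 ^ q"
  using assms
proof (induction q arbitrary: l)
  case 0
  then show ?case by (simp add: level_weight_zero_questions)
next
  case (Suc q)
  have "level_weight l (Suc q) = level_weight l q + level_weight (min (l + 1) 4) q"
    using Suc.prems by (rule level_weight_Suc)
  also have "\<dots> \<le> 2 ^ q + 2 ^ q"
    using Suc by (intro add_mono) auto
  finally show ?case by simp
qed

lemma level_weight_le_level_weight_0: "level_weight l q \<le> level_weight 0 q"
  unfolding level_weight_def by (auto intro: sum_mono2)

lemma two_level_weight_0_le_power: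
  assumes "7 \<le> q"
  shows "2 * level_weight 0 q \<le> 2 ^ q"
  using assms
proof (induction q rule: dec_induct)
  case base
  then show ?case by (simp add: level_weight_def eval_nat_numeral)
next
  case (step q)
  have "level_weight 0 (Suc q) = level_weight 0 q + level_weight 1 q"
    using level_weight_Suc [of 0 q] by simp
  also have "\<dots> \<le> 2 * level_weight 0 q"
    using level_weight_le_level_weight_0 [of 1 q] by simp
  finally show ?case
    using step.IH by simp
qed

lemma state_weight_0:
  assumes "is_state m \<sigma>"
  shows "state_weight m \<sigma> 0 = card (support m \<sigma>)"
proof -
  have "state_weight m \<sigma> 0 = (\<Sum>y\<in>univ m. if \<sigma> y < 4 then 1 else 0)"
    unfolding state_weight_def
    by (rule sum.cong) (use assms in \<open>auto simp: is_state_def level_weight_zero_questions\<close>)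
  then show ?thesis
    by (simp add: sum.If_cases support_def Collect_conj_eq Int_commute)
qed

lemma is_state_ans_yes: "is_state m (ans_yes \<sigma> Q)"
  by (simp add: is_state_def ans_yes_def)

lemma is_state_ans_no: "is_state m (ans_no \<sigma> Q)"
  by (simp add: is_state_def ans_no_def)

lemma state_weight_ans_yes_ans_no:
  assumes "is_state m \<sigma>"
  shows "state_weight m (ans_yes \<sigma> Q) q + state_weight m (ans_no \<sigma> Q) q = state_weight m \<sigma> (Suc q)"
  unfolding state_weight_def sum.distrib [symmetric]
proof (rule sum.cong)
  fix y assume "y \<in> univ m"
  then have "\<sigma> y \<le> 4"
    using assms by (simp add: is_state_def)
  then show "level_weight (ans_yes \<sigma> Q y) q + level_weight (ans_no \<sigma> Q y) q = level_weight (\<sigma> y) (Suc q)"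
    by (simp add: ans_yes_def ans_no_def level_weight_Suc min_absorb1)
qed simp

section \<open>States with at most one element below level 3\<close>

definition level3_except :: "nat \<Rightarrow> (nat \<Rightarrow> nat) \<Rightarrow> nat \<Rightarrow> bool" where
  "level3_except m \<sigma> x \<longleftrightarrow> x \<in> univ m \<and> (\<forall>y\<in>support m \<sigma> - {x}. \<sigma> y = 3)"

lemma level3_except_level:
  assumes "level3_except m \<sigma> x" and "y \<in> univ m" and "y \<noteq> x" and "\<sigma> y < 4"
  shows "\<sigma> y = 3"
  using assms unfolding level3_except_def support_def by blast

lemma level3_except_mono:
  assumes "level3_except m \<sigma> x" and "\<And>y. y \<in> univ m \<Longrightarrow> \<sigma> y \<le> \<tau> y"
  shows "level3_except m \<tau> x"
  unfolding level3_except_def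
proof (intro conjI ballI)
  show "x \<in> univ m"
    using assms(1) by (simp add: level3_except_def)
  fix y assume y: "y \<in> support m \<tau> - {x}"
  then have "y \<in> univ m" "\<tau> y < 4"
    by (simp_all add: support_def)
  moreover have "\<sigma> y \<le> \<tau> y"
    using assms(2) \<open>y \<in> univ m\<close> .
  ultimately have "y \<in> support m \<sigma> - {x}"
    using y by (simp add: support_def)
  then have "\<sigma> y = 3"
    using assms(1) by (simp add: level3_except_def)
  then show "\<tau> y = 3"
    using \<open>\<sigma> y \<le> \<tau> y\<close> \<open>\<tau> y < 4\<close> by simp
qed

lemma level3_except_ans_yes:
  "is_state m \<sigma> \<Longrightarrow> level3_except m \<sigma> x \<Longrightarrow> level3_except m (ans_yes \<sigma> Q) x"
  by (erule level3_except_mono) (simp add: is_state_def ans_yes_def)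

lemma level3_except_ans_no:
  "is_state m \<sigma> \<Longrightarrow> level3_except m \<sigma> x \<Longrightarrow> level3_except m (ans_no \<sigma> Q) x"
  by (erule level3_except_mono) (simp add: is_state_def ans_no_def)

lemma state_weight_level3_except:
  assumes "is_state m \<sigma>" and "level3_except m \<sigma> x"
  shows "state_weight m \<sigma> q = level_weight (\<sigma> x) q + card (support m \<sigma> - {x})"
proof -
  have x: "x \<in> univ m"
    using assms(2) by (simp add: level3_except_def)
  have "(\<Sum>y\<in>univ m - {x}. level_weight (\<sigma> y) q) = (\<Sum>y\<in>univ m - {x}. if \<sigma> y < 4 then 1 else 0)"
  proof (rule sum.cong)
    fix y assume y: "y \<in> univ m - {x}"
    show "level_weight (\<sigma> y) q = (if \<sigma> y < 4 then 1 else 0)"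
    proof (cases "\<sigma> y < 4")
      case True
      then have "\<sigma> y = 3"
        using level3_except_level [OF assms(2)] y by blast
      then show ?thesis by (simp add: level_weight_def)
    next
      case False
      moreover have "\<sigma> y \<le> 4"
        using assms(1) y by (simp add: is_state_def)
      ultimately have "\<sigma> y = 4"
        by simp
      then show ?thesis by (simp add: level_weight_def)
    qed
  qed simp
  also have "\<dots> = card (support m \<sigma> - {x})"
    by (simp add: sum.If_cases support_def set_diff_eq Collect_conj_eq Int_ac)
  finally show ?thesis
    unfolding state_weight_def sum.remove [OF finite_univ x] by simp
qed

lemma support_ans_yes_level3_except:
  assumes "is_state m \<sigma>" and "level3_except m \<sigma> x"
  shows "support m (ans_yes \<sigma> Q) - {x} = (support m \<sigma> - {x}) \<inter> Q"
proof -
  have "ans_yes \<sigma> Q y < 4 \<longleftrightarrow> \<sigma> y < 4 \<and> y \<in> Q"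
    if "y \<in> univ m" and "y \<noteq> x" for y
  proof (cases "\<sigma> y < 4")
    case True
    then have "\<sigma> y = 3"
      using level3_except_level [OF assms(2)] that by blast
    then show ?thesis by (simp add: ans_yes_def)
  qed (simp add: ans_yes_def)
  then show ?thesis
    by (auto simp: support_def)
qed

lemma state_weight_ans_yes_level3_except:
  assumes "is_state m \<sigma>" and "level3_except m \<sigma> x" and "x \<in> Q"
  shows "state_weight m (ans_yes \<sigma> Q) q = level_weight (\<sigma> x) q + card ((support m \<sigma> - {x}) \<inter> Q)"
proof -
  have "ans_yes \<sigma> Q x = \<sigma> x"
    using assms by (simp add: ans_yes_def level3_except_def is_state_def)
  then show ?thesis
    using state_weight_level3_except [OF is_state_ans_yes level3_except_ans_yes [OF assms(1,2)]]
    by (simp add: support_ans_yes_level3_except [OF assms(1,2)])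
qed

lemma ex_card_Int_lessThan:
  fixes K :: "nat set"
  assumes "K \<subseteq> {..<n}" and "a \<le> card K"
  shows "\<exists>b. card (K \<inter> {..<b}) = a"
proof -
  define f where "f b = int (card (K \<inter> {..<b}))" for b
  have "\<bar>f (b + 1) - f b\<bar> \<le> 1" for b
  proof -
    have "card (K \<inter> {..<b}) \<le> card (K \<inter> {..<b + 1})"
      by (rule card_mono) auto
    moreover have "card (K \<inter> {..<b + 1}) \<le> card (insert b (K \<inter> {..<b}))"
      by (rule card_mono) auto
    moreover have "card (insert b (K \<inter> {..<b})) \<le> card (K \<inter> {..<b}) + 1"
      by (simp add: card_insert_if)
    ultimately show ?thesis
      by (simp add: f_def)
  qed
  moreover have "f 0 \<le> int a" and "int a \<le> f n"
    using assms by (simp_all add: f_def Int_absorb2)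
  ultimately obtain b where "f b = int a"
    using nat0_intermed_int_val [of n f "int a"] by blast
  then show ?thesis
    by (auto simp: f_def)
qed

lemma is_interval_singleton: "x \<in> univ m \<Longrightarrow> is_interval m {x}"
  unfolding is_interval_def by (intro disjI2 exI [of _ x]) auto

lemma is_interval_initial_segment: "is_interval m (univ m \<inter> {..<b})"
proof (cases b)
  case (Suc c)
  then have "univ m \<inter> {..<b} = {y \<in> univ m. 0 \<le> y \<and> y \<le> c}"
    by auto
  then show ?thesis
    unfolding is_interval_def by blast
qed (simp add: is_interval_def)

text \<open>The question asks for x together with as many level-3 elements as the yes-answer can
  take without exceeding 2^q; by conservation the no-answer receives the rest.\<close>

lemma balanced_four_interval_question:
  assumes st: "is_state m \<sigma>" and lv: "level3_except m \<sigma> x"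
    and bound: "state_weight m \<sigma> (Suc q) \<le> 2 ^ Suc q"
  obtains Q where "four_interval_question m Q"
    and "state_weight m (ans_yes \<sigma> Q) q \<le> 2 ^ q" and "state_weight m (ans_no \<sigma> Q) q \<le> 2 ^ q"
proof -
  define K where "K = support m \<sigma> - {x}"
  define w where "w = level_weight (\<sigma> x) q"
  define w' where "w' = level_weight (min (\<sigma> x + 1) 4) q"
  define a where "a = min (card K) (2 ^ q - w)"
  have x: "x \<in> univ m" and "\<sigma> x \<le> 4"
    using st lv by (simp_all add: level3_except_def is_state_def)
  then have total: "state_weight m \<sigma> (Suc q) = w + w' + card K"
    using state_weight_level3_except [OF st lv, of "Suc q"] level_weight_Suc
    by (simp add: K_def w_def w'_def)
  have "w \<le> 2 ^ q" and "w' \<le> 2 ^ q"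
    using \<open>\<sigma> x \<le> 4\<close> by (simp_all add: w_def w'_def level_weight_le_power)
  have "K \<subseteq> {..<2 ^ m}"
    by (auto simp: K_def support_def univ_def)
  then obtain b where b: "card (K \<inter> {..<b}) = a"
    using ex_card_Int_lessThan [of K "2 ^ m" a] by (auto simp: a_def)
  define Q where "Q = {x} \<union> (univ m \<inter> {..<b})"
  have "four_interval_question m Q"
    unfolding four_interval_question_def
    by (intro exI [of _ "[{x}, univ m \<inter> {..<b}]"])
      (simp add: Q_def x is_interval_singleton is_interval_initial_segment)
  moreover have "K \<inter> Q = K \<inter> {..<b}"
    by (auto simp: K_def Q_def support_def)
  then have yes: "state_weight m (ans_yes \<sigma> Q) q = w + a"
    using state_weight_ans_yes_level3_except [OF st lv, of Q q] b
    by (simp add: Q_def K_def w_def)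
  moreover have "state_weight m (ans_no \<sigma> Q) q = w + w' + card K - (w + a)"
    using state_weight_ans_yes_ans_no [OF st, of Q q] total yes by simp
  ultimately show ?thesis
    using that \<open>w \<le> 2 ^ q\<close> \<open>w' \<le> 2 ^ q\<close> bound total
    by (cases "card K \<le> 2 ^ q - w") (auto simp: a_def)
qed

definition four_interval_winnable :: "nat \<Rightarrow> (nat \<Rightarrow> nat) \<Rightarrow> nat \<Rightarrow> bool" where
  "four_interval_winnable m \<sigma> q \<longleftrightarrow>
     (\<exists>S. complete_depth S q \<and> questions_ok (four_interval_question m) S \<and> winning m \<sigma> S)"

lemma four_interval_winnable_0: "final m \<sigma> \<Longrightarrow> four_interval_winnable m \<sigma> 0"
  unfolding four_interval_winnable_def by (intro exI [of _ Leaf]) simp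

lemma four_interval_winnable_Suc:
  assumes "four_interval_question m Q"
    and "four_interval_winnable m (ans_yes \<sigma> Q) q" and "four_interval_winnable m (ans_no \<sigma> Q) q"
  shows "four_interval_winnable m \<sigma> (Suc q)"
proof -
  obtain S1 S2 where "complete_depth S1 q" "questions_ok (four_interval_question m) S1"
      "winning m (ans_yes \<sigma> Q) S1" "complete_depth S2 q" "questions_ok (four_interval_question m) S2"
      "winning m (ans_no \<sigma> Q) S2"
    using assms(2,3) unfolding four_interval_winnable_def by blast
  then show ?thesis
    unfolding four_interval_winnable_def using assms(1)
    by (intro exI [of _ "Node Q S1 S2"]) simp
qed

lemma four_interval_winnable_level3_except:
  assumes "is_state m \<sigma>" and "level3_except m \<sigma> x" and "state_weight m \<sigma> q \<le> 2 ^ q"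
  shows "four_interval_winnable m \<sigma> q"
  using assms
proof (induction q arbitrary: \<sigma>)
  case 0
  then show ?case
    by (intro four_interval_winnable_0) (simp add: final_def state_weight_0)
next
  case (Suc q)
  obtain Q where "four_interval_question m Q"
    and "state_weight m (ans_yes \<sigma> Q) q \<le> 2 ^ q" and "state_weight m (ans_no \<sigma> Q) q \<le> 2 ^ q"
    using balanced_four_interval_question [OF Suc.prems] .
  moreover have "level3_except m (ans_yes \<sigma> Q) x" and "level3_except m (ans_no \<sigma> Q) x"
    using Suc.prems(1,2) by (simp_all add: level3_except_ans_yes level3_except_ans_no)
  ultimately show ?case
    using Suc.IH is_state_ans_yes is_state_ans_no by (blast intro: four_interval_winnable_Suc)
qed

lemma state_weight_level3_except_le_power:
  assumes st: "is_state m \<sigma>" and lv: "level3_except m \<sigma> x"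
  defines "q \<equiv> max 7 (m + 1)"
  shows "state_weight m \<sigma> q \<le> 2 ^ q"
proof -
  have "card (support m \<sigma> - {x}) \<le> card (univ m)"
    by (rule card_mono) (auto simp: support_def)
  then have "state_weight m \<sigma> q \<le> level_weight 0 q + 2 ^ m"
    using state_weight_level3_except [OF st lv, of q] level_weight_le_level_weight_0 [of "\<sigma> x" q]
    by (simp add: card_univ)
  moreover have "2 * level_weight 0 q \<le> 2 ^ q"
    by (rule two_level_weight_0_le_power) (simp add: q_def)
  moreover have "2 * 2 ^ m \<le> (2::nat) ^ q"
    using power_increasing [of "m + 1" q "2::nat"] by (simp add: q_def)
  ultimately show ?thesis
    by linarith
qed

lemma card_low_levels_le_1:
  assumes "state_type m \<sigma> \<in> T_types n"
  shows "card {y \<in> univ m. \<sigma> y < 3} \<le> 1"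
proof -
  have "{y \<in> univ m. \<sigma> y < 3} =
      {y \<in> univ m. \<sigma> y = 0} \<union> ({y \<in> univ m. \<sigma> y = 1} \<union> {y \<in> univ m. \<sigma> y = 2})"
    by auto
  then have "card {y \<in> univ m. \<sigma> y < 3} = tcount m \<sigma> 0 + (tcount m \<sigma> 1 + tcount m \<sigma> 2)"
    unfolding tcount_def by (simp add: card_Un_disjoint disjoint_iff)
  then show ?thesis
    using assms by (auto simp: T_types_def state_type_def)
qed

lemma ex_level3_except:
  assumes "state_type m \<sigma> \<in> T_types n"
  obtains x where "level3_except m \<sigma> x"
proof -
  define L where "L = {y \<in> univ m. \<sigma> y < 3}"
  obtain x where "x \<in> univ m" and "L \<subseteq> {x}"
  proof (cases "L = {}")
    case True
    then show ?thesis
      using that [of 0] by (simp add: univ_def)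
  next
    case False
    then obtain x where "x \<in> L"
      by blast
    moreover have "card L \<le> Suc 0"
      using card_low_levels_le_1 [OF assms] by (simp add: L_def)
    ultimately show ?thesis
      using that [of x] by (auto simp: L_def card_le_Suc0_iff_eq)
  qed
  then have "level3_except m \<sigma> x"
    by (fastforce simp: level3_except_def support_def L_def)
  then show ?thesis
    by (rule that)
qed

section \<open>Well-shapedness\<close>

lemma cyclic_successors_if_zip_rotate1:
  assumes "\<forall>(a, b) \<in> set (zip xs (rotate1 xs)). P a b"
  shows "\<forall>i < length xs. P (xs ! i) (xs ! ((i + 1) mod length xs))"
proof (intro allI impI)
  fix i assume i: "i < length xs"
  then have "(xs ! i, rotate1 xs ! i) \<in> set (zip xs (rotate1 xs))"
    by (auto simp: set_zip)
  then show "P (xs ! i) (xs ! ((i + 1) mod length xs))"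
    using assms i by (auto simp: nth_rotate1)
qed

text \<open>The arc levels are rotations of the cycle 0 1 2 3 2 3 2 3 2 1 2 1 starting at level l;
  F fills the first arc, R a later level-3 arc, and all other arcs are empty.\<close>

lemma well_shaped_if_rotation:
  assumes rot: "rotate r (sorted_list_of_set (support m \<sigma>)) = F @ R"
    and F: "\<forall>y\<in>set F. \<sigma> y = l" and "l \<le> 3" and R: "\<forall>y\<in>set R. \<sigma> y = 3"
  shows "well_shaped m \<sigma>"
proof -
  have "l = 0 \<or> l = 1 \<or> l = 2 \<or> l = 3"
    using \<open>l \<le> 3\<close> by auto
  then obtain arcs :: "(nat \<times> nat list) list" where
    "concat (map snd arcs) = F @ R" and
    "\<forall>(l, a) \<in> set arcs. l \<le> 3 \<and> (\<forall>y\<in>set a. \<sigma> y = l)" and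
    adj: "\<forall>(p, p') \<in> set (zip arcs (rotate1 arcs)). \<bar>int (fst p) - int (fst p')\<bar> = 1" and
    "\<forall>i < 3. length (filter (\<lambda>p. fst p = i) arcs) = 2 * i + 1" and
    "length (filter (\<lambda>p. fst p = 3) arcs) = 3"
  proof (elim disjE)
    assume "l = 0"
    then show ?thesis
      by (intro that [of "[(0,F),(1,[]),(2,[]),(3,R),(2,[]),(3,[]),(2,[]),(3,[]),(2,[]),(1,[]),(2,[]),(1,[])]"])
        (use F R in \<open>simp_all add: All_less_Suc eval_nat_numeral\<close>)
  next
    assume "l = 1"
    then show ?thesis
      by (intro that [of "[(1,F),(2,[]),(3,R),(2,[]),(3,[]),(2,[]),(3,[]),(2,[]),(1,[]),(2,[]),(1,[]),(0,[])]"])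
        (use F R in \<open>simp_all add: All_less_Suc eval_nat_numeral\<close>)
  next
    assume "l = 2"
    then show ?thesis
      by (intro that [of "[(2,F),(3,R),(2,[]),(3,[]),(2,[]),(3,[]),(2,[]),(1,[]),(2,[]),(1,[]),(0,[]),(1,[])]"])
        (use F R in \<open>simp_all add: All_less_Suc eval_nat_numeral\<close>)
  next
    assume "l = 3"
    then show ?thesis
      by (intro that [of "[(3,F),(2,[]),(3,R),(2,[]),(3,[]),(2,[]),(1,[]),(2,[]),(1,[]),(0,[]),(1,[]),(2,[])]"])
        (use F R in \<open>simp_all add: All_less_Suc eval_nat_numeral\<close>)
  qed
  moreover note cyclic_successors_if_zip_rotate1 [OF adj]
  ultimately show ?thesis
    unfolding well_shaped_def by (intro exI [of _ r] exI [of _ arcs]) (simp only: rot)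
qed

lemma well_shaped_level3_except:
  assumes "level3_except m \<sigma> x"
  shows "well_shaped m \<sigma>"
proof -
  define Ls where "Ls = sorted_list_of_set (support m \<sigma>)"
  have set_Ls: "set Ls = support m \<sigma>" and "distinct Ls"
    by (simp_all add: Ls_def)
  have level3: "\<sigma> y = 3" if "y \<in> set Ls" and "y \<noteq> x" for y
    using assms that set_Ls by (simp add: level3_except_def)
  show ?thesis
  proof (cases "x \<in> set Ls")
    case True
    then obtain ys zs where Ls: "Ls = ys @ x # zs"
      by (blast dest: split_list)
    then have "rotate (length ys) Ls = [x] @ (zs @ ys)"
      by (simp add: rotate_append)
    moreover have "\<sigma> x \<le> 3"
      using True set_Ls by (simp add: support_def)
    moreover have "\<forall>y\<in>set (zs @ ys). \<sigma> y = 3"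
      using level3 \<open>distinct Ls\<close> by (auto simp: Ls)
    ultimately show ?thesis
      by (intro well_shaped_if_rotation [of "length ys" m \<sigma> "[x]" "zs @ ys" "\<sigma> x"]) (simp_all add: Ls_def)
  next
    case False
    then show ?thesis
      using level3 by (intro well_shaped_if_rotation [of 0 m \<sigma> "[]" Ls 3]) (auto simp: Ls_def)
  qed
qed

theorem lemma8:
  fixes m n :: nat and \<sigma> :: "nat \<Rightarrow> nat"
  assumes "is_state m \<sigma>"
    and "state_type m \<sigma> \<in> T_types n"
  shows "four_interval_nice m \<sigma>"
proof -
  obtain x where lv: "level3_except m \<sigma> x"
    using ex_level3_except [OF assms(2)] .
  have "\<exists>q. weight m \<sigma> q \<le> 2 ^ q"
    using state_weight_level3_except_le_power [OF assms(1) lv] weight_eq_state_weight [OF assms(1)]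
    by metis
  then have "state_weight m \<sigma> (character m \<sigma>) \<le> 2 ^ character m \<sigma>"
    unfolding character_def weight_eq_state_weight [OF assms(1), symmetric] by (rule LeastI_ex)
  then have "four_interval_winnable m \<sigma> (character m \<sigma>)"
    by (rule four_interval_winnable_level3_except [OF assms(1) lv])
  then show ?thesis
    using well_shaped_level3_except [OF lv]
    by (simp add: four_interval_nice_def four_interval_winnable_def)
qed

end
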